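(* Let $\lambda>0$, $X\in\mathbb R^{\mathbf m\times\mathbf n}$, and define on $\mathbb R^{\mathbf m\times\mathbf r}\times\mathbb R^{\mathbf r\times\mathbf n}$ $$f(U,V)=\tfrac12\|X-UV\|_F^2+\tfrac{\lambda}{2}\|I_{\mathbf r}-VV^\top\|_F^2,$$ $$\varphi_1(U,V)=\tfrac12\|U\|_F^2,\qquad \varphi_2(U,V)=\tfrac{6\lambda}{4}\|V\|_F^4+\tfrac12\varepsilon(U)\|V\|_F^2,\quad \varepsilon(U)=\max\{\|U^\top U\|,2\lambda\},$$ where $\|\cdot\|$ denotes the spectral norm. Then: (1) for every fixed $V$, the function $f(\cdot,V)$ is $(L_1(V),l_1)$-relatively smooth with respect to $\varphi_1(\cdot,V)$ with $L_1(V)=\|VV^\top\|$ and $l_1=0$, i.e. for all $U,U'$: $0\le f(U,V)-f(U',V)-\langle\nabla_Uf(U',V),U-U'\rangle\le \|VV^\top\|\,D_{\varphi_1(\cdot,V)}(U,U')$; (2) for every fixed $U$, the function $f(U,\cdot)$ is $(L_2,l_2)$-relatively smooth with respect to $\varphi_2(U,\cdot)$ with $L_2=1$ and $l_2=1$, i.e. for all $V,V'$: $-D_{\varphi_2(U,\cdot)}(V,V')\le f(U,V)-f(U,V')-\langle\nabla_Vf(U,V'),V-V'\rangle\le D_{\varphi_2(U,\cdot)}(V,V')$.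
   Context: Inner products on matrix spaces are the Frobenius (trace) inner product. For a differentiable convex $\psi$, the Bregman divergence is $D_\psi(x,y)=\psi(x)-\psi(y)-\langle\nabla\psi(y),x-y\rangle$. A function $\phi$ is $(L,l)$-relatively smooth with respect to $\psi$ if for all $x,y$: $-lD_\psi(x,y)\le\phi(x)-\phi(y)-\langle\nabla\phi(y),x-y\rangle\le LD_\psi(x,y)$. *)

theory Defs
  imports "HOL-Analysis.Analysis"
begin

text \<open>Matrices are elements of real^'c^'r (rows indexed by 'r); on this type
  norm is the Frobenius norm and the inner product is the Frobenius (trace) inner product.\<close>

definition grad :: "('a::real_inner \<Rightarrow> real) \<Rightarrow> 'a \<Rightarrow> 'a" where
  "grad f x = (SOME g. (f has_derivative (\<lambda>h. g \<bullet> h)) (at x))"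

definition bregman :: "('a::real_inner \<Rightarrow> real) \<Rightarrow> 'a \<Rightarrow> 'a \<Rightarrow> real" where
  "bregman psi x y = psi x - psi y - grad psi y \<bullet> (x - y)"

definition rel_smooth :: "('a::real_inner \<Rightarrow> real) \<Rightarrow> ('a \<Rightarrow> real) \<Rightarrow> real \<Rightarrow> real \<Rightarrow> bool" where
  "rel_smooth phi psi L l \<longleftrightarrow> (\<forall>x y.
      - l * bregman psi x y \<le> phi x - phi y - grad phi y \<bullet> (x - y) \<and>
      phi x - phi y - grad phi y \<bullet> (x - y) \<le> L * bregman psi x y)"

definition spec_norm :: "real^'n^'m \<Rightarrow> real" where
  "spec_norm A = onorm (\<lambda>x. A *v x)"

definition fobj :: "real \<Rightarrow> real^'n^'m \<Rightarrow> real^'r^'m \<Rightarrow> real^'n^'r \<Rightarrow> real" where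
  "fobj lam X U V = 1/2 * (norm (X - U ** V))^2 + lam/2 * (norm (mat 1 - V ** transpose V))^2"

definition phi1 :: "real^'r^'m \<Rightarrow> real^'n^'r \<Rightarrow> real" where
  "phi1 U V = 1/2 * (norm U)^2"

definition epsU :: "real \<Rightarrow> real^'r^'m \<Rightarrow> real" where
  "epsU lam U = max (spec_norm (transpose U ** U)) (2 * lam)"

definition phi2 :: "real \<Rightarrow> real^'r^'m \<Rightarrow> real^'n^'r \<Rightarrow> real" where
  "phi2 lam U V = 6 * lam / 4 * (norm V)^4 + 1/2 * epsU lam U * (norm V)^2"

end

theory Submission
  imports Defs
begin

text \<open>All Bregman divergences involved can be computed in closed form. For
  h = 1/2 |g|^2 with g differentiable at y,
  D_h(x,y) = 1/2 |g x - g y|^2 + <g y, g x - g y - g'(y)(x - y)>;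
  the second term vanishes when g is affine and equals |Y^T D|^2 - |D|^2 for
  g V = I - V V^T, where D = V - Y. Hence in U the divergence of f is
  1/2 |(U - U') V|^2, which is at most |V V^T| times that of phi1. In V, with
  d = |D|^2 and p = |V|^2 - |Y|^2, the divergence of phi2 is
  3 lam (p^2/2 + |Y|^2 d) + eps d/2, whereas that of f lies between -lam d and
  eps d/2 + lam (|V + Y|^2 d/2 - d + |Y|^2 d), using
  |V V^T - Y Y^T| <= |V + Y| |V - Y|; the parallelogram law
  |V + Y|^2 = 4 |Y|^2 + 2 p - d and 2 lam <= eps close the gap.\<close>

lemma inner_transpose: "transpose (A::real^'n^'m) \<bullet> transpose B = A \<bullet> B"
  unfolding inner_vec_def transpose_def by (simp add: sum.swap[of "\<lambda>i j. A$j$i * B$j$i"])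

lemma norm_transpose: "norm (transpose (A::real^'n^'m)) = norm A"
  by (simp add: norm_eq_sqrt_inner inner_transpose)

lemma inner_matrix_mult_right: "((A::real^'k^'m) ** B) \<bullet> C = A \<bullet> (C ** transpose B)"
  unfolding inner_vec_def matrix_matrix_mult_def transpose_def
  by (simp add: sum_distrib_left sum_distrib_right mult_ac) (rule sum.cong[OF refl], rule sum.swap)

lemma inner_matrix_mult_left: "((A::real^'k^'m) ** B) \<bullet> C = B \<bullet> (transpose A ** C)"
proof -
  have "(A ** B) \<bullet> C = (transpose B ** transpose A) \<bullet> transpose C"
    by (metis inner_transpose matrix_transpose_mul)
  also have "\<dots> = transpose B \<bullet> transpose (transpose A ** C)"
    by (simp add: inner_matrix_mult_right matrix_transpose_mul)
  finally show ?thesis by (simp only: inner_transpose)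
qed

lemma inner_mat1_gram: "mat 1 \<bullet> ((D::real^'n^'m) ** transpose D) = (norm D)^2"
  by (simp only: inner_commute[of "mat 1"] inner_matrix_mult_right transpose_transpose
      matrix_mul_lid power2_norm_eq_inner)

lemma inner_gram_gram:
  "((Y::real^'n^'m) ** transpose Y) \<bullet> (D ** transpose D) = (norm (transpose Y ** D))^2"
proof -
  have "(Y ** transpose Y) \<bullet> (D ** transpose D)
      = transpose Y \<bullet> ((transpose Y ** D) ** transpose D)"
    by (simp add: inner_matrix_mult_left matrix_mul_assoc)
  also have "\<dots> = ((transpose Y ** D) ** transpose D) \<bullet> transpose Y"
    by (rule inner_commute)
  also have "\<dots> = (transpose Y ** D) \<bullet> (transpose Y ** D)"
    by (simp only: inner_matrix_mult_right transpose_transpose)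
  finally show ?thesis by (simp only: power2_norm_eq_inner)
qed

lemma norm_matrix_mult_sq_rows:
  "(norm ((A::real^'k^'m) ** (B::real^'n^'k)))^2 = (\<Sum>i\<in>UNIV. (norm (transpose B *v A$i))^2)"
proof -
  have "(A ** B) $ i = transpose B *v A$i" for i
    by (simp add: matrix_matrix_mult_def vector_matrix_mult_def vec_eq_iff)
  then show ?thesis by (simp add: power2_norm_eq_inner inner_vec_def)
qed

lemma norm_sq_matrix_rows: "(norm (A::real^'n^'m))^2 = (\<Sum>i\<in>UNIV. (norm (A$i))^2)"
  by (simp add: power2_norm_eq_inner inner_vec_def)

lemma norm_matrix_vector_le: "norm ((A::real^'n^'m) *v x) \<le> norm A * norm x"
proof -
  have "(norm (A *v x))^2 = (\<Sum>i\<in>UNIV. ((A *v x)$i)^2)"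
    unfolding power2_norm_eq_inner inner_vec_def by (simp add: power2_eq_square)
  also have "\<dots> = (\<Sum>i\<in>UNIV. (A$i \<bullet> x)^2)"
    by (simp only: matrix_vector_mul_component)
  also have "\<dots> \<le> (\<Sum>i\<in>UNIV. (norm (A$i) * norm x)^2)"
    by (intro sum_mono) (simp add: power2_le_iff_abs_le Cauchy_Schwarz_ineq2)
  also have "\<dots> = (norm A * norm x)^2"
    by (simp add: norm_sq_matrix_rows power_mult_distrib sum_distrib_right)
  finally show ?thesis by (rule power2_le_imp_le) simp
qed

lemma norm_matrix_mult_le: "norm ((A::real^'k^'m) ** (B::real^'n^'k)) \<le> norm A * norm B"
proof -
  have "(norm (A ** B))^2 \<le> (\<Sum>i\<in>UNIV. (norm B * norm (A$i))^2)"
    unfolding norm_matrix_mult_sq_rows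
    by (intro sum_mono power_mono)
       (use norm_matrix_vector_le[of "transpose B"] in \<open>simp_all add: norm_transpose\<close>)
  also have "\<dots> = (norm A * norm B)^2"
    by (simp add: norm_sq_matrix_rows power_mult_distrib sum_distrib_left mult.commute)
  finally show ?thesis by (rule power2_le_imp_le) simp
qed

lemma norm_matrix_vector_sq_le_spec_norm:
  "(norm ((A::real^'n^'m) *v x))^2 \<le> spec_norm (transpose A ** A) * (norm x)^2"
proof -
  have "(norm (A *v x))^2 = (x v* transpose A) \<bullet> (A *v x)"
    by (simp add: power2_norm_eq_inner)
  also have "\<dots> = x \<bullet> ((transpose A ** A) *v x)"
    by (simp only: dot_lmul_matrix matrix_vector_mul_assoc)
  also have "\<dots> \<le> norm x * norm ((transpose A ** A) *v x)"
    by (rule norm_cauchy_schwarz)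
  also have "\<dots> \<le> norm x * (spec_norm (transpose A ** A) * norm x)"
    unfolding spec_norm_def by (intro mult_left_mono onorm matrix_vector_mul_bounded_linear) simp
  finally show ?thesis by (simp add: power2_eq_square mult_ac)
qed

lemma norm_matrix_mult_sq_le_spec_norm_right:
  "(norm ((D::real^'k^'m) ** (V::real^'n^'k)))^2 \<le> spec_norm (V ** transpose V) * (norm D)^2"
proof -
  have "(norm (D ** V))^2 \<le> (\<Sum>i\<in>UNIV. spec_norm (V ** transpose V) * (norm (D$i))^2)"
    unfolding norm_matrix_mult_sq_rows
    by (intro sum_mono) (metis norm_matrix_vector_sq_le_spec_norm transpose_transpose)
  then show ?thesis by (simp add: norm_sq_matrix_rows sum_distrib_left)
qed

lemma norm_matrix_mult_sq_le_spec_norm_left: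
  "(norm ((U::real^'k^'m) ** (D::real^'n^'k)))^2 \<le> spec_norm (transpose U ** U) * (norm D)^2"
  using norm_matrix_mult_sq_le_spec_norm_right[of "transpose D" "transpose U"]
  by (simp add: norm_transpose matrix_transpose_mul[symmetric])

lemma norm_gram_diff_le:
  "norm ((V::real^'n^'m) ** transpose V - Y ** transpose Y) \<le> norm (V + Y) * norm (V - Y)"
proof -
  have "2 *\<^sub>R (V ** transpose V - Y ** transpose Y)
      = (V + Y) ** transpose (V - Y) + (V - Y) ** transpose (V + Y)"
    by (simp add: vec_eq_iff matrix_matrix_mult_def transpose_def algebra_simps sum.distrib sum_subtractf)
  then have "2 * norm (V ** transpose V - Y ** transpose Y)
      \<le> norm ((V + Y) ** transpose (V - Y)) + norm ((V - Y) ** transpose (V + Y))"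
    by (metis norm_scaleR norm_triangle_ineq abs_numeral)
  also have "\<dots> \<le> 2 * (norm (V + Y) * norm (V - Y))"
    using norm_matrix_mult_le[of "V + Y" "transpose (V - Y)"]
      norm_matrix_mult_le[of "V - Y" "transpose (V + Y)"]
    by (simp add: norm_transpose mult.commute[of "norm (V - Y)"])
  finally show ?thesis by simp
qed

lemma bounded_bilinear_matrix_mult:
  "bounded_bilinear (\<lambda>(A::real^'k^'m) (B::real^'n^'k). A ** B)"
proof
  fix A A' :: "real^'k^'m" and B B' :: "real^'n^'k" and r :: real
  show "(A + A') ** B = A ** B + A' ** B"
    by (simp add: matrix_matrix_mult_def vec_eq_iff distrib_right sum.distrib)
  show "A ** (B + B') = A ** B + A ** B'" by (rule matrix_add_ldistrib)
  show "(r *\<^sub>R A) ** B = r *\<^sub>R (A ** B)" by (simp add: scalar_matrix_assoc)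
  show "A ** (r *\<^sub>R B) = r *\<^sub>R (A ** B)" by (simp add: matrix_scalar_ac scalar_matrix_assoc)
next
  show "\<exists>K. \<forall>(A::real^'k^'m) (B::real^'n^'k). norm (A ** B) \<le> norm A * norm B * K"
    by (rule exI[of _ 1]) (simp add: norm_matrix_mult_le)
qed

lemma bounded_linear_transpose: "bounded_linear (transpose :: real^'n^'m \<Rightarrow> real^'m^'n)"
  unfolding linear_conv_bounded_linear[symmetric]
  by (rule linearI) (simp_all add: transpose_def vec_eq_iff)

lemma has_derivative_gram:
  "((\<lambda>V. (V::real^'n^'m) ** transpose V)
    has_derivative (\<lambda>H. Y ** transpose H + H ** transpose Y)) (at Y)"
  by (rule bounded_bilinear.FDERIV[OF bounded_bilinear_matrix_mult has_derivative_ident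
        bounded_linear.has_derivative[OF bounded_linear_transpose has_derivative_ident]])

lemma inner_grad_eq_derivative:
  fixes f :: "'a::euclidean_space \<Rightarrow> real"
  assumes "(f has_derivative F) (at x)"
  shows "grad f x \<bullet> h = F h"
proof -
  have "F = (\<lambda>h. adjoint F 1 \<bullet> h)"
    using adjoint_works[OF has_derivative_linear[OF assms], of _ 1]
    by (simp add: fun_eq_iff inner_commute)
  then have "\<exists>g. (f has_derivative (\<lambda>h. g \<bullet> h)) (at x)"
    using assms by metis
  then have "(f has_derivative (\<lambda>h. grad f x \<bullet> h)) (at x)"
    unfolding grad_def by (rule someI_ex)
  then show ?thesis
    using assms has_derivative_unique by metis
qed

lemma bregman_has_derivative:
  fixes f :: "'a::euclidean_space \<Rightarrow> real"
  assumes "(f has_derivative F) (at y)"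
  shows "bregman f x y = f x - f y - F (x - y)"
  by (simp add: bregman_def inner_grad_eq_derivative[OF assms])

lemma bregman_add:
  fixes f g :: "'a::euclidean_space \<Rightarrow> real"
  assumes "f differentiable (at y)" and "g differentiable (at y)"
  shows "bregman (\<lambda>x. f x + g x) x y = bregman f x y + bregman g x y"
proof -
  obtain F G where F: "(f has_derivative F) (at y)" and G: "(g has_derivative G) (at y)"
    using assms unfolding differentiable_def by blast
  show ?thesis
    by (simp add: bregman_has_derivative[OF F] bregman_has_derivative[OF G]
        bregman_has_derivative[OF has_derivative_add[OF F G]])
qed

lemma bregman_scale:
  fixes f :: "'a::euclidean_space \<Rightarrow> real"
  assumes "f differentiable (at y)"
  shows "bregman (\<lambda>x. c * f x) x y = c * bregman f x y"
proof -
  obtain F where F: "(f has_derivative F) (at y)"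
    using assms unfolding differentiable_def by blast
  show ?thesis
    by (simp add: bregman_has_derivative[OF F]
        bregman_has_derivative[OF has_derivative_mult_right[OF F]] algebra_simps)
qed

lemma bregman_add_const:
  fixes f :: "'a::euclidean_space \<Rightarrow> real"
  assumes "f differentiable (at y)"
  shows "bregman (\<lambda>x. f x + c) x y = bregman f x y"
proof -
  obtain F where F: "(f has_derivative F) (at y)"
    using assms unfolding differentiable_def by blast
  show ?thesis
    using bregman_has_derivative[OF F] bregman_has_derivative[OF has_derivative_add_const[OF F]] by simp
qed

lemma has_derivative_half_norm_sq_comp:
  fixes g :: "'a::real_normed_vector \<Rightarrow> 'b::real_inner"
  assumes "(g has_derivative g') (at y)"
  shows "((\<lambda>x. 1/2 * (norm (g x))^2) has_derivative (\<lambda>h. g y \<bullet> g' h)) (at y)"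
  unfolding power2_norm_eq_inner
  by (rule has_derivative_eq_rhs[OF has_derivative_mult_right[OF has_derivative_inner[OF assms assms]]])
     (simp add: fun_eq_iff inner_commute)

lemma differentiable_half_norm_sq_comp:
  fixes g :: "'a::real_normed_vector \<Rightarrow> 'b::real_inner"
  assumes "g differentiable (at y)"
  shows "(\<lambda>x. 1/2 * (norm (g x))^2) differentiable (at y)"
  using assms has_derivative_half_norm_sq_comp unfolding differentiable_def by blast

lemma bregman_half_norm_sq_comp:
  fixes g :: "'a::euclidean_space \<Rightarrow> 'b::real_inner"
  assumes "(g has_derivative g') (at y)"
  shows "bregman (\<lambda>x. 1/2 * (norm (g x))^2) x y
    = 1/2 * (norm (g x - g y))^2 + g y \<bullet> (g x - g y - g' (x - y))"
  unfolding bregman_has_derivative[OF has_derivative_half_norm_sq_comp[OF assms]]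
  by (simp add: power2_norm_eq_inner inner_diff_left inner_diff_right inner_commute algebra_simps)

lemma bregman_half_norm_sq_affine:
  fixes A :: "'a::euclidean_space \<Rightarrow> 'b::real_inner"
  assumes "bounded_linear A"
  shows "bregman (\<lambda>x. 1/2 * (norm (b - A x))^2) x y = 1/2 * (norm (A (x - y)))^2"
proof -
  have "((\<lambda>x. b - A x) has_derivative (\<lambda>h. - A h)) (at y)"
    using has_derivative_diff[OF has_derivative_const
        bounded_linear.has_derivative[OF assms has_derivative_ident]] by simp
  from bregman_half_norm_sq_comp[OF this, of x] show ?thesis
    by (simp add: linear_diff[OF bounded_linear.linear[OF assms]] norm_minus_commute)
qed

lemma bregman_half_norm_sq:
  "bregman (\<lambda>x::'a::euclidean_space. 1/2 * (norm x)^2) x y = 1/2 * (norm (x - y))^2"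
  using bregman_half_norm_sq_affine[OF bounded_linear_minus[OF bounded_linear_ident], of 0 x y]
  by (simp add: norm_minus_commute)

lemma bregman_half_norm_pow4:
  "bregman (\<lambda>x::'a::euclidean_space. 1/2 * (norm x)^4) x y
    = 1/2 * ((norm x)^2 - (norm y)^2)^2 + (norm y)^2 * (norm (x - y))^2"
proof -
  have "((\<lambda>x. (norm x)^2) has_derivative (\<lambda>h. 2 * (y \<bullet> h))) (at y)"
    unfolding power2_norm_eq_inner
    by (rule has_derivative_eq_rhs[OF has_derivative_inner[OF has_derivative_ident has_derivative_ident]])
       (simp add: fun_eq_iff inner_commute)
  from bregman_half_norm_sq_comp[OF this, of x]
  have "bregman (\<lambda>x. 1/2 * (norm x)^4) x y
      = 1/2 * ((norm x)^2 - (norm y)^2)^2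
        + (norm y)^2 * ((norm x)^2 - (norm y)^2 - 2 * (y \<bullet> (x - y)))"
    by (simp add: power2_abs flip: power_mult)
  also have "(norm x)^2 - (norm y)^2 - 2 * (y \<bullet> (x - y)) = (norm (x - y))^2"
    by (simp add: power2_norm_eq_inner inner_diff_left inner_diff_right inner_commute)
  finally show ?thesis .
qed

lemma bregman_half_norm_sq_gram:
  "bregman (\<lambda>V::real^'n^'m. 1/2 * (norm (mat 1 - V ** transpose V))^2) V Y
    = 1/2 * (norm (V ** transpose V - Y ** transpose Y))^2 - (norm (V - Y))^2
      + (norm (transpose Y ** (V - Y)))^2"
proof -
  define D where "D = V - Y"
  have deriv: "((\<lambda>V. mat 1 - V ** transpose V)
      has_derivative (\<lambda>H. - (Y ** transpose H + H ** transpose Y))) (at Y)"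
    using has_derivative_diff[OF has_derivative_const has_derivative_gram] by simp
  have increment: "(mat 1 - V ** transpose V) - (mat 1 - Y ** transpose Y)
      = - (V ** transpose V - Y ** transpose Y)"
    by simp
  have remainder: "- (V ** transpose V - Y ** transpose Y) - - (Y ** transpose D + D ** transpose Y)
      = - (D ** transpose D)"
    unfolding D_def
    by (simp add: vec_eq_iff matrix_matrix_mult_def transpose_def algebra_simps sum.distrib sum_subtractf)
  have "(mat 1 - Y ** transpose Y) \<bullet> (- (D ** transpose D))
      = (norm (transpose Y ** D))^2 - (norm D)^2"
    by (simp add: inner_diff_left inner_mat1_gram inner_gram_gram)
  then show ?thesis
    using bregman_half_norm_sq_comp[OF deriv, of V, folded D_def,
        unfolded increment remainder norm_minus_cancel]
    unfolding D_def by simp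
qed

lemma bregman_fobj_left:
  fixes X :: "real^'n^'m" and U Y :: "real^'r^'m" and V :: "real^'n^'r"
  shows "bregman (\<lambda>U. fobj lam X U V) U Y = 1/2 * (norm ((U - Y) ** V))^2"
proof -
  have lin: "bounded_linear (\<lambda>U. U ** V)"
    by (rule bounded_bilinear.bounded_linear_left[OF bounded_bilinear_matrix_mult])
  have diff: "(\<lambda>U. 1/2 * (norm (X - U ** V))^2) differentiable (at Y)"
    by (intro differentiable_half_norm_sq_comp differentiable_diff differentiable_const
        bounded_linear_imp_differentiable lin)
  show ?thesis
    unfolding fobj_def bregman_add_const[OF diff] bregman_half_norm_sq_affine[OF lin] ..
qed

lemma bregman_fobj_right:
  fixes X :: "real^'n^'m" and U :: "real^'r^'m" and V Y :: "real^'n^'r"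
  shows "bregman (\<lambda>V. fobj lam X U V) V Y
    = 1/2 * (norm (U ** (V - Y)))^2
      + lam * (1/2 * (norm (V ** transpose V - Y ** transpose Y))^2 - (norm (V - Y))^2
               + (norm (transpose Y ** (V - Y)))^2)"
proof -
  have lin: "bounded_linear (\<lambda>V. U ** V)"
    by (rule bounded_bilinear.bounded_linear_right[OF bounded_bilinear_matrix_mult])
  have diff_fit: "(\<lambda>V. 1/2 * (norm (X - U ** V))^2) differentiable (at Y)"
    by (intro differentiable_half_norm_sq_comp differentiable_diff differentiable_const
        bounded_linear_imp_differentiable lin)
  have diff_orth: "(\<lambda>V. 1/2 * (norm (mat 1 - V ** transpose V))^2) differentiable (at Y)"
    by (intro differentiable_half_norm_sq_comp differentiable_diff differentiable_const
        differentiableI[OF has_derivative_gram])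
  have "(\<lambda>V. fobj lam X U V)
      = (\<lambda>V. 1/2 * (norm (X - U ** V))^2 + lam * (1/2 * (norm (mat 1 - V ** transpose V))^2))"
    by (simp add: fobj_def fun_eq_iff)
  then show ?thesis
    by (simp only: bregman_add[OF diff_fit differentiable_mult[OF differentiable_const diff_orth]]
        bregman_scale[OF diff_orth] bregman_half_norm_sq_affine[OF lin] bregman_half_norm_sq_gram)
qed

lemma bregman_phi2:
  fixes U :: "real^'r^'m" and V Y :: "real^'n^'r"
  shows "bregman (\<lambda>V. phi2 lam U V) V Y
    = 3 * lam * (1/2 * ((norm V)^2 - (norm Y)^2)^2 + (norm Y)^2 * (norm (V - Y))^2)
      + epsU lam U * (1/2 * (norm (V - Y))^2)"
proof -
  have diff_sq: "(\<lambda>V::real^'n^'r. 1/2 * (norm V)^2) differentiable (at Y)"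
    by (simp add: power2_norm_eq_inner)
  have "(norm V)^4 = (V \<bullet> V)^2" for V :: "real^'n^'r"
    by (simp add: power2_norm_eq_inner[symmetric] flip: power_mult)
  then have diff_pow4: "(\<lambda>V::real^'n^'r. 1/2 * (norm V)^4) differentiable (at Y)"
    by simp
  have "(\<lambda>V::real^'n^'r. phi2 lam U V)
      = (\<lambda>V. 3 * lam * (1/2 * (norm V)^4) + epsU lam U * (1/2 * (norm V)^2))"
    by (simp add: phi2_def fun_eq_iff)
  then show ?thesis
    by (simp only: bregman_add[OF differentiable_mult[OF differentiable_const diff_pow4]
          differentiable_mult[OF differentiable_const diff_sq]]
        bregman_scale[OF diff_pow4] bregman_scale[OF diff_sq] bregman_half_norm_pow4 bregman_half_norm_sq)
qed

lemma rel_smoothI: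
  assumes "\<And>x y. - l * bregman psi x y \<le> bregman phi x y"
    and "\<And>x y. bregman phi x y \<le> L * bregman psi x y"
  shows "rel_smooth phi psi L l"
  using assms unfolding rel_smooth_def bregman_def by blast

lemma rel_smooth_fobj_left:
  fixes X :: "real^'n^'m" and V :: "real^'n^'r"
  shows "rel_smooth (\<lambda>U :: real^'r^'m. fobj lam X U V) (\<lambda>U. phi1 U V)
           (spec_norm (V ** transpose V)) 0"
proof (rule rel_smoothI)
  fix U Y :: "real^'r^'m"
  have phi1: "bregman (\<lambda>U. phi1 U V) U Y = 1/2 * (norm (U - Y))^2"
    unfolding phi1_def by (rule bregman_half_norm_sq)
  show "- 0 * bregman (\<lambda>U. phi1 U V) U Y \<le> bregman (\<lambda>U. fobj lam X U V) U Y"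
    by (simp add: bregman_fobj_left)
  show "bregman (\<lambda>U. fobj lam X U V) U Y
      \<le> spec_norm (V ** transpose V) * bregman (\<lambda>U. phi1 U V) U Y"
    using norm_matrix_mult_sq_le_spec_norm_right[of "U - Y" V] by (simp add: bregman_fobj_left phi1)
qed

lemma abs_divergence_le_arith:
  fixes lam e d s p n g t :: real
  assumes "0 \<le> lam" "2 * lam \<le> e" "0 \<le> d" "0 \<le> s"
    and "0 \<le> n" "n \<le> e * d" "0 \<le> g" "g \<le> (4 * s + 2 * p - d) * d" "0 \<le> t" "t \<le> s * d"
  shows "\<bar>1/2 * n + lam * (1/2 * g - d + t)\<bar> \<le> 3 * lam * (1/2 * p^2 + s * d) + e * (1/2 * d)"
proof -
  have "- (e * (1/2 * d)) \<le> - (lam * d)"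
    using mult_right_mono[OF assms(2,3)] by simp
  moreover have "0 \<le> 3 * lam * (1/2 * p^2 + s * d)"
    using assms by simp
  moreover have "- (lam * d) \<le> lam * (1/2 * g - d + t)"
    using assms by (simp add: algebra_simps)
  moreover have "lam * (1/2 * g - d + t) \<le> lam * (1/2 * ((4 * s + 2 * p - d) * d) - d + s * d)"
    using assms by (intro mult_left_mono) simp_all
  moreover have "\<dots> = 3 * lam * (1/2 * p^2 + s * d) - lam * (p^2 + (p - d)^2 / 2 + d)"
    by (simp add: power2_eq_square field_simps)
  moreover have "0 \<le> lam * (p^2 + (p - d)^2 / 2 + d)"
    using assms by simp
  ultimately show ?thesis
    using assms(5,6) by (simp add: abs_le_iff)
qed

lemma rel_smooth_fobj_right:
  fixes X :: "real^'n^'m" and U :: "real^'r^'m"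
  assumes "0 \<le> lam"
  shows "rel_smooth (\<lambda>V :: real^'n^'r. fobj lam X U V) (\<lambda>V. phi2 lam U V) 1 1"
proof (rule rel_smoothI)
  fix V Y :: "real^'n^'r"
  define e where "e = epsU lam U"
  define d where "d = (norm (V - Y))^2"
  define s where "s = (norm Y)^2"
  define p where "p = (norm V)^2 - (norm Y)^2"
  define n where "n = (norm (U ** (V - Y)))^2"
  define g where "g = (norm (V ** transpose V - Y ** transpose Y))^2"
  define t where "t = (norm (transpose Y ** (V - Y)))^2"
  have f: "bregman (\<lambda>V. fobj lam X U V) V Y = 1/2 * n + lam * (1/2 * g - d + t)"
    unfolding bregman_fobj_right n_def g_def d_def t_def ..
  have phi: "bregman (\<lambda>V. phi2 lam U V) V Y = 3 * lam * (1/2 * p^2 + s * d) + e * (1/2 * d)"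
    unfolding bregman_phi2 p_def s_def d_def e_def ..
  have nonneg: "0 \<le> d" "0 \<le> s" "0 \<le> n" "0 \<le> g" "0 \<le> t"
    unfolding d_def s_def n_def g_def t_def by simp_all
  have e_ge: "2 * lam \<le> e" "spec_norm (transpose U ** U) \<le> e"
    unfolding e_def epsU_def by simp_all
  have n_le: "n \<le> e * d"
    using norm_matrix_mult_sq_le_spec_norm_left[of U "V - Y"] mult_right_mono[OF e_ge(2) nonneg(1)]
    unfolding n_def d_def by linarith
  have "(norm (V + Y))^2 = 4 * s + 2 * p - d"
    unfolding s_def p_def d_def power2_norm_eq_inner
    by (simp add: inner_add_left inner_add_right inner_diff_left inner_diff_right inner_commute)
  then have g_le: "g \<le> (4 * s + 2 * p - d) * d"
    using power_mono[OF norm_gram_diff_le[of V Y] norm_ge_zero, of 2]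
    unfolding g_def d_def by (simp add: power_mult_distrib)
  have t_le: "t \<le> s * d"
    using power_mono[OF norm_matrix_mult_le[of "transpose Y" "V - Y"] norm_ge_zero, of 2]
    unfolding t_def s_def d_def by (simp add: norm_transpose power_mult_distrib)
  have "\<bar>bregman (\<lambda>V. fobj lam X U V) V Y\<bar> \<le> bregman (\<lambda>V. phi2 lam U V) V Y"
    unfolding f phi
    by (rule abs_divergence_le_arith[OF assms e_ge(1) nonneg(1,2,3) n_le nonneg(4) g_le nonneg(5) t_le])
  then show "- 1 * bregman (\<lambda>V. phi2 lam U V) V Y \<le> bregman (\<lambda>V. fobj lam X U V) V Y"
    and "bregman (\<lambda>V. fobj lam X U V) V Y \<le> 1 * bregman (\<lambda>V. phi2 lam U V) V Y"
    by (simp_all add: abs_le_iff)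
qed

theorem proposition5p1:
  fixes lam :: real and X :: "real^'n^'m"
  assumes "lam > 0"
  shows "(\<forall>V :: real^'n^'r. rel_smooth (\<lambda>U :: real^'r^'m. fobj lam X U V) (\<lambda>U. phi1 U V)
              (spec_norm (V ** transpose V)) 0)
       \<and> (\<forall>U :: real^'r^'m. rel_smooth (\<lambda>V :: real^'n^'r. fobj lam X U V) (\<lambda>V. phi2 lam U V) 1 1)"
  using rel_smooth_fobj_left rel_smooth_fobj_right[OF less_imp_le[OF assms]] by blast

end
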